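(* Assume $M$ is projective in $\sigma[M]$ and let $X\in\sigma[M]$ with $X=\bigoplus_{\lambda\in\Lambda}X_\lambda$ an internal direct sum of submodules $X_\lambda$. Then $\mathrm{rad}_M(X)=\bigoplus_{\lambda\in\Lambda}\mathrm{rad}_M(X_\lambda)$.
   Context: $R$ is a ring with identity, modules are unital left $R$-modules, $M$ is a fixed left $R$-module; $\sigma[M]$ is the full subcategory of $R$-modules isomorphic to submodules of $M$-generated modules. For $N\le M$ and a module $X$, $N\cdot X$ is the intersection of the kernels of all homomorphisms $X\to W$ where $W$ ranges over modules with $f(N)=0$ for all $f\in\mathrm{Hom}_R(M,W)$ (for $Z\le X$, $N\cdot Z$ is formed regarding $Z$ as a module). A proper submodule $P$ of a module $X$ is $M$-prime if for all $N\le M$, $Z\le X$, $N\cdot Z\subseteq P$ implies $N\cdot X\subseteq P$ or $Z\subseteq P$. $\mathrm{rad}_M(X)$ is the intersection of all $M$-prime submodules of $X$ if $X$ has at least one, and $\mathrm{rad}_M(X)=X$ otherwise. *)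

theory Defs
  imports "HOL-Algebra.Module"
begin

text \<open>Left modules over a (not necessarily commutative) ring with identity R.
  A module is a HOL-Algebra module record; only carrier, add, zero, smult matter.\<close>

definition lmodule :: "('r, 'c) ring_scheme \<Rightarrow> ('r, 'x) module \<Rightarrow> bool" where
  "lmodule R X \<longleftrightarrow> ring R \<and> abelian_group X \<and>
     (\<forall>a\<in>carrier R. \<forall>x\<in>carrier X. smult X a x \<in> carrier X) \<and>
     (\<forall>a\<in>carrier R. \<forall>b\<in>carrier R. \<forall>x\<in>carrier X.
        smult X (a \<oplus>\<^bsub>R\<^esub> b) x = smult X a x \<oplus>\<^bsub>X\<^esub> smult X b x) \<and>
     (\<forall>a\<in>carrier R. \<forall>x\<in>carrier X. \<forall>y\<in>carrier X.
        smult X a (x \<oplus>\<^bsub>X\<^esub> y) = smult X a x \<oplus>\<^bsub>X\<^esub> smult X a y) \<and>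
     (\<forall>a\<in>carrier R. \<forall>b\<in>carrier R. \<forall>x\<in>carrier X.
        smult X (a \<otimes>\<^bsub>R\<^esub> b) x = smult X a (smult X b x)) \<and>
     (\<forall>x\<in>carrier X. smult X \<one>\<^bsub>R\<^esub> x = x)"

definition submod :: "('r, 'c) ring_scheme \<Rightarrow> ('r, 'x) module \<Rightarrow> 'x set \<Rightarrow> bool" where
  "submod R X N \<longleftrightarrow> N \<subseteq> carrier X \<and> \<zero>\<^bsub>X\<^esub> \<in> N \<and>
     (\<forall>x\<in>N. \<forall>y\<in>N. x \<oplus>\<^bsub>X\<^esub> y \<in> N) \<and>
     (\<forall>x\<in>N. \<ominus>\<^bsub>X\<^esub> x \<in> N) \<and>
     (\<forall>a\<in>carrier R. \<forall>x\<in>N. smult X a x \<in> N)"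

definition restr :: "('r, 'x) module \<Rightarrow> 'x set \<Rightarrow> ('r, 'x) module" where
  "restr X N = X\<lparr>carrier := N\<rparr>"

definition hom_mod :: "('r, 'c) ring_scheme \<Rightarrow> ('r, 'x) module \<Rightarrow> ('r, 'y) module \<Rightarrow> ('x \<Rightarrow> 'y) \<Rightarrow> bool" where
  "hom_mod R X Y f \<longleftrightarrow> f \<in> carrier X \<rightarrow> carrier Y \<and>
     (\<forall>x\<in>carrier X. \<forall>y\<in>carrier X. f (x \<oplus>\<^bsub>X\<^esub> y) = f x \<oplus>\<^bsub>Y\<^esub> f y) \<and>
     (\<forall>a\<in>carrier R. \<forall>x\<in>carrier X. f (smult X a x) = smult Y a (f x))"

definition kernel_mod :: "('r, 'x) module \<Rightarrow> ('r, 'y) module \<Rightarrow> ('x \<Rightarrow> 'y) \<Rightarrow> 'x set" where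
  "kernel_mod X Y f = {x \<in> carrier X. f x = \<zero>\<^bsub>Y\<^esub>}"

definition span_mod :: "('r, 'c) ring_scheme \<Rightarrow> ('r, 'y) module \<Rightarrow> 'y set \<Rightarrow> 'y set" where
  "span_mod R Y S = \<Inter> {N. submod R Y N \<and> S \<subseteq> N}"

text \<open>Y is M-generated: Y is the sum of the images of all homomorphisms M \<rightarrow> Y
  (equivalently, an epimorphic image of a direct sum of copies of M).\<close>
definition Mgen :: "('r, 'c) ring_scheme \<Rightarrow> ('r, 'm) module \<Rightarrow> ('r, 'y) module \<Rightarrow> bool" where
  "Mgen R M Y \<longleftrightarrow> carrier Y = span_mod R Y (\<Union> {f ` carrier M | f. hom_mod R M Y f})"

text \<open>X \<in> \<sigma>[M]: X is isomorphic to a submodule of an M-generated module. The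
  M-generated module is taken from the universe type 'u.\<close>
definition in_sigma :: "'u itself \<Rightarrow> ('r, 'c) ring_scheme \<Rightarrow> ('r, 'm) module \<Rightarrow> ('r, 'x) module \<Rightarrow> bool" where
  "in_sigma U R M X \<longleftrightarrow> (\<exists>(Y :: ('r, 'u) module) N g.
     lmodule R Y \<and> Mgen R M Y \<and> submod R Y N \<and>
     hom_mod R X (restr Y N) g \<and> bij_betw g (carrier X) N)"

definition proj_sigma :: "'u itself \<Rightarrow> ('r, 'c) ring_scheme \<Rightarrow> ('r, 'm) module \<Rightarrow> bool" where
  "proj_sigma U R M \<longleftrightarrow> (\<forall>(A :: ('r, 'u) module) (B :: ('r, 'u) module) g f.
     lmodule R A \<and> lmodule R B \<and> in_sigma U R M A \<and> in_sigma U R M B \<and>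
     hom_mod R A B g \<and> g ` carrier A = carrier B \<and> hom_mod R M B f \<longrightarrow>
     (\<exists>h. hom_mod R M A h \<and> (\<forall>m\<in>carrier M. g (h m) = f m)))"

text \<open>W ranges over modules with carrier type 'x set,
  which contains (copies of) all quotients of X.\<close>
definition prod_dot :: "('r, 'c) ring_scheme \<Rightarrow> ('r, 'm) module \<Rightarrow> 'm set \<Rightarrow> ('r, 'x) module \<Rightarrow> 'x set" where
  "prod_dot R M N X = carrier X \<inter> \<Inter> {kernel_mod X W f | (W :: ('r, 'x set) module) f.
     lmodule R W \<and> (\<forall>g. hom_mod R M W g \<longrightarrow> (\<forall>n\<in>N. g n = \<zero>\<^bsub>W\<^esub>)) \<and> hom_mod R X W f}"

definition M_prime :: "('r, 'c) ring_scheme \<Rightarrow> ('r, 'm) module \<Rightarrow> ('r, 'x) module \<Rightarrow> 'x set \<Rightarrow> bool" where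
  "M_prime R M X P \<longleftrightarrow> submod R X P \<and> P \<noteq> carrier X \<and>
     (\<forall>N Z. submod R M N \<longrightarrow> submod R X Z \<longrightarrow>
        prod_dot R M N (restr X Z) \<subseteq> P \<longrightarrow> prod_dot R M N X \<subseteq> P \<or> Z \<subseteq> P)"

definition radM :: "('r, 'c) ring_scheme \<Rightarrow> ('r, 'm) module \<Rightarrow> ('r, 'x) module \<Rightarrow> 'x set" where
  "radM R M X = (if \<exists>P. M_prime R M X P then \<Inter> {P. M_prime R M X P} else carrier X)"

definition sum_fam :: "('r, 'x) module \<Rightarrow> 'l set \<Rightarrow> ('l \<Rightarrow> 'x set) \<Rightarrow> 'x set" where
  "sum_fam X L S = {finsum X s F | s F. finite F \<and> F \<subseteq> L \<and> (\<forall>l\<in>F. s l \<in> S l)}"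

definition internal_dsum :: "('r, 'c) ring_scheme \<Rightarrow> ('r, 'x) module \<Rightarrow> 'l set \<Rightarrow> ('l \<Rightarrow> 'x set) \<Rightarrow> bool" where
  "internal_dsum R X L S \<longleftrightarrow> (\<forall>l\<in>L. submod R X (S l)) \<and> carrier X = sum_fam X L S \<and>
     (\<forall>l\<in>L. S l \<inter> sum_fam X (L - {l}) S \<subseteq> {\<zero>\<^bsub>X\<^esub>})"

end

theory Submission
  imports Defs "HOL-Algebra.AbelCoset"
begin

text \<open>
  The sum of the radicals of the summands lies in the radical of X: if P is M-prime in X and
  does not contain the summand X_\<lambda>, then P \<inter> X_\<lambda> is M-prime in X_\<lambda>.

  Conversely, let \<pi> be the projection of X onto X_\<lambda> along the other summands. For an
  M-prime Q of X_\<lambda>, the preimage of Q under \<pi> is M-prime in X, because N\<cdot>\<pi>(Z) = \<pi>(N\<cdot>Z) for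
  every submodule Z of X. This identity is where projectivity of M in \<sigma>[M] is used: every
  homomorphism from M to \<pi>(Z)/\<pi>(N\<cdot>Z) lifts to Z, hence kills N. So the \<lambda>-component \<pi>(x) of any
  x \<in> rad_M(X) lies in every M-prime of X_\<lambda>.
\<close>

lemma
  assumes "lmodule R X"
  shows lmodule_ring: "ring R"
    and lmodule_abelian_group: "abelian_group X"
    and lmodule_smult_closed: "\<lbrakk>a \<in> carrier R; x \<in> carrier X\<rbrakk> \<Longrightarrow> smult X a x \<in> carrier X"
    and lmodule_add_smult: "\<lbrakk>a \<in> carrier R; b \<in> carrier R; x \<in> carrier X\<rbrakk> \<Longrightarrow>
      smult X (a \<oplus>\<^bsub>R\<^esub> b) x = smult X a x \<oplus>\<^bsub>X\<^esub> smult X b x"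
    and lmodule_smult_add: "\<lbrakk>a \<in> carrier R; x \<in> carrier X; y \<in> carrier X\<rbrakk> \<Longrightarrow>
      smult X a (x \<oplus>\<^bsub>X\<^esub> y) = smult X a x \<oplus>\<^bsub>X\<^esub> smult X a y"
    and lmodule_smult_assoc: "\<lbrakk>a \<in> carrier R; b \<in> carrier R; x \<in> carrier X\<rbrakk> \<Longrightarrow>
      smult X (a \<otimes>\<^bsub>R\<^esub> b) x = smult X a (smult X b x)"
    and lmodule_smult_one: "x \<in> carrier X \<Longrightarrow> smult X \<one>\<^bsub>R\<^esub> x = x"
  using assms by (simp_all add: lmodule_def)

lemma additive_abelian_group_homI:
  assumes "abelian_group X" "abelian_group Y" "f \<in> carrier X \<rightarrow> carrier Y"
    and "\<And>x y. \<lbrakk>x \<in> carrier X; y \<in> carrier X\<rbrakk> \<Longrightarrow> f (x \<oplus>\<^bsub>X\<^esub> y) = f x \<oplus>\<^bsub>Y\<^esub> f y"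
  shows "abelian_group_hom X Y f"
  using assms
  by (intro abelian_group_homI group_hom.intro group_hom_axioms.intro abelian_group.a_group)
    (auto simp: hom_def)

lemma smult_abelian_group_hom:
  assumes "lmodule R X" "a \<in> carrier R"
  shows "abelian_group_hom X X (smult X a)"
  using assms
  by (intro additive_abelian_group_homI lmodule_abelian_group) (auto simp: lmodule_smult_closed lmodule_smult_add)

lemma lmodule_smult_zero:
  "\<lbrakk>lmodule R X; a \<in> carrier R\<rbrakk> \<Longrightarrow> smult X a \<zero>\<^bsub>X\<^esub> = \<zero>\<^bsub>X\<^esub>"
  by (rule abelian_group_hom.hom_zero[OF smult_abelian_group_hom])

lemma
  assumes "hom_mod R X Y f"
  shows hom_mod_closed: "x \<in> carrier X \<Longrightarrow> f x \<in> carrier Y"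
    and hom_mod_add: "\<lbrakk>x \<in> carrier X; y \<in> carrier X\<rbrakk> \<Longrightarrow> f (x \<oplus>\<^bsub>X\<^esub> y) = f x \<oplus>\<^bsub>Y\<^esub> f y"
    and hom_mod_smult: "\<lbrakk>a \<in> carrier R; x \<in> carrier X\<rbrakk> \<Longrightarrow> f (smult X a x) = smult Y a (f x)"
  using assms by (auto simp: hom_mod_def)

lemma hom_mod_abelian_group_hom:
  "\<lbrakk>abelian_group X; abelian_group Y; hom_mod R X Y f\<rbrakk> \<Longrightarrow> abelian_group_hom X Y f"
  by (rule additive_abelian_group_homI) (auto simp: hom_mod_def)

lemma hom_mod_id: "hom_mod R X X (\<lambda>x. x)"
  by (simp add: hom_mod_def)

lemma hom_mod_comp: "\<lbrakk>hom_mod R X Y f; hom_mod R Y Z g\<rbrakk> \<Longrightarrow> hom_mod R X Z (\<lambda>x. g (f x))"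
  by (auto simp: hom_mod_def Pi_def)

lemma hom_mod_inv_into:
  assumes "lmodule R X" "hom_mod R X Y f" "bij_betw f (carrier X) (carrier Y)"
  shows "hom_mod R Y X (inv_into (carrier X) f)"
proof -
  interpret abelian_group X using assms(1) by (rule lmodule_abelian_group)
  let ?g = "inv_into (carrier X) f"
  have g: "?g y \<in> carrier X" "f (?g y) = y" if "y \<in> carrier Y" for y
    using that assms(3) by (auto simp: bij_betw_def inv_into_into f_inv_into_f)
  have gf: "?g (f x) = x" if "x \<in> carrier X" for x
    using that assms(3) by (simp add: bij_betw_imp_inj_on inv_into_f_f)
  show ?thesis unfolding hom_mod_def
  proof (intro conjI ballI)
    fix x y assume "x \<in> carrier Y" "y \<in> carrier Y"
    then show "?g (x \<oplus>\<^bsub>Y\<^esub> y) = ?g x \<oplus>\<^bsub>X\<^esub> ?g y"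
      using gf[of "?g x \<oplus>\<^bsub>X\<^esub> ?g y"] hom_mod_add[OF assms(2)] g by simp
  next
    fix a x assume "a \<in> carrier R" "x \<in> carrier Y"
    then show "?g (smult Y a x) = smult X a (?g x)"
      using gf[of "smult X a (?g x)"] hom_mod_smult[OF assms(2)] lmodule_smult_closed[OF assms(1)] g
      by simp
  qed (use g in auto)
qed

lemma restr_simps [simp]:
  "carrier (restr X N) = N" "zero (restr X N) = zero X" "add (restr X N) = add X"
  "smult (restr X N) = smult X" "restr (restr X A) B = restr X B"
  by (simp_all add: restr_def)

lemma
  assumes "submod R X N"
  shows submod_subset: "N \<subseteq> carrier X"
    and submod_zero: "\<zero>\<^bsub>X\<^esub> \<in> N"
    and submod_add: "\<lbrakk>x \<in> N; y \<in> N\<rbrakk> \<Longrightarrow> x \<oplus>\<^bsub>X\<^esub> y \<in> N"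
    and submod_a_inv: "x \<in> N \<Longrightarrow> \<ominus>\<^bsub>X\<^esub> x \<in> N"
    and submod_smult: "\<lbrakk>a \<in> carrier R; x \<in> N\<rbrakk> \<Longrightarrow> smult X a x \<in> N"
  using assms by (simp_all add: submod_def)

lemma submod_carrier:
  assumes "lmodule R X" shows "submod R X (carrier X)"
proof -
  interpret abelian_group X using assms by (rule lmodule_abelian_group)
  show ?thesis using lmodule_smult_closed[OF assms] by (simp add: submod_def)
qed

lemma submod_Inter: "\<lbrakk>S \<noteq> {}; \<And>N. N \<in> S \<Longrightarrow> submod R X N\<rbrakk> \<Longrightarrow> submod R X (\<Inter>S)"
  unfolding submod_def by blast

lemma submod_Int: "\<lbrakk>submod R X P; submod R X Z\<rbrakk> \<Longrightarrow> submod R X (P \<inter> Z)"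
  unfolding submod_def by auto

lemma submod_abelian_group:
  assumes "abelian_group X" "submod R X N"
  shows "abelian_group (restr X N)"
proof -
  interpret abelian_group X by fact
  have N: "N \<subseteq> carrier X" using assms(2) by (rule submod_subset)
  show ?thesis
  proof (rule abelian_groupI)
    fix x assume "x \<in> carrier (restr X N)"
    then show "\<exists>y\<in>carrier (restr X N). y \<oplus>\<^bsub>restr X N\<^esub> x = \<zero>\<^bsub>restr X N\<^esub>"
      using N submod_a_inv[OF assms(2)] by (auto intro!: bexI[of _ "\<ominus>\<^bsub>X\<^esub> x"] l_neg)
  qed (use N assms(2) in \<open>auto simp: submod_add submod_zero a_ac subset_iff\<close>)
qed

lemma restr_a_inv:
  assumes "abelian_group X" "submod R X N" "x \<in> N"
  shows "\<ominus>\<^bsub>restr X N\<^esub> x = \<ominus>\<^bsub>X\<^esub> x"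
proof -
  interpret abelian_group X by fact
  interpret N: abelian_group "restr X N" using assms(1,2) by (rule submod_abelian_group)
  show ?thesis
    using assms(2,3) submod_subset[OF assms(2)]
    by (intro N.minus_equality) (auto simp: submod_a_inv l_neg)
qed

lemma submod_lmodule:
  assumes "lmodule R X" "submod R X N"
  shows "lmodule R (restr X N)"
  using assms submod_subset[OF assms(2)] submod_smult[OF assms(2)]
    submod_abelian_group[OF lmodule_abelian_group[OF assms(1)] assms(2)]
  unfolding lmodule_def by (simp add: subset_iff)

lemma submod_restr_iff:
  assumes "abelian_group X" "submod R X N"
  shows "submod R (restr X N) P \<longleftrightarrow> submod R X P \<and> P \<subseteq> N"
  using assms submod_subset[OF assms(2)] restr_a_inv[OF assms]
  unfolding submod_def by (auto 0 3 simp: subset_iff)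

lemma submod_finsum:
  assumes "abelian_group X" "submod R X N" "finite F" "\<And>l. l \<in> F \<Longrightarrow> s l \<in> N"
  shows "finsum X s F \<in> N"
proof -
  interpret abelian_group X by fact
  show ?thesis
    using assms(3,4)
  proof (induction F rule: finite_induct)
    case (insert l F)
    have "s \<in> insert l F \<rightarrow> carrier X" using insert.prems submod_subset[OF assms(2)] by blast
    then show ?case using insert submod_add[OF assms(2)] by simp
  qed (simp add: submod_zero[OF assms(2)])
qed

lemma hom_mod_restr_dom: "\<lbrakk>hom_mod R X Y f; N \<subseteq> carrier X\<rbrakk> \<Longrightarrow> hom_mod R (restr X N) Y f"
  unfolding hom_mod_def by (auto simp: Pi_def subset_iff)

lemma hom_mod_restr_cod: "\<lbrakk>hom_mod R X Y f; f ` carrier X \<subseteq> N\<rbrakk> \<Longrightarrow> hom_mod R X (restr Y N) f"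
  unfolding hom_mod_def by auto

lemma hom_mod_restr_cod_iff:
  "N \<subseteq> carrier Y \<Longrightarrow> hom_mod R X (restr Y N) f \<longleftrightarrow> hom_mod R X Y f \<and> f ` carrier X \<subseteq> N"
  unfolding hom_mod_def by auto

lemma submod_image:
  assumes "abelian_group X" "abelian_group Y" "hom_mod R X Y f" "submod R X N"
  shows "submod R Y (f ` N)"
proof -
  interpret abelian_group_hom X Y f using assms(1-3) by (rule hom_mod_abelian_group_hom)
  have N: "N \<subseteq> carrier X" using assms(4) by (rule submod_subset)
  show ?thesis unfolding submod_def
  proof (intro conjI ballI)
    show "\<zero>\<^bsub>Y\<^esub> \<in> f ` N" using submod_zero[OF assms(4)] hom_zero by (metis image_eqI)
  next
    fix x y assume "x \<in> f ` N" "y \<in> f ` N"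
    then obtain a b where ab: "a \<in> N" "b \<in> N" "x = f a" "y = f b" by blast
    moreover have "a \<in> carrier X" "b \<in> carrier X" using ab N by auto
    ultimately have "x \<oplus>\<^bsub>Y\<^esub> y = f (a \<oplus>\<^bsub>X\<^esub> b)" by simp
    then show "x \<oplus>\<^bsub>Y\<^esub> y \<in> f ` N" by (simp add: ab submod_add[OF assms(4)])
  next
    fix x assume "x \<in> f ` N"
    then obtain a where a: "a \<in> N" "x = f a" by blast
    then have "\<ominus>\<^bsub>Y\<^esub> x = f (\<ominus>\<^bsub>X\<^esub> a)" using N by (simp add: subsetD)
    then show "\<ominus>\<^bsub>Y\<^esub> x \<in> f ` N" by (simp add: a submod_a_inv[OF assms(4)])
  next
    fix a x assume "a \<in> carrier R" "x \<in> f ` N"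
    then obtain b where b: "b \<in> N" "x = f b" by blast
    then have "smult Y a x = f (smult X a b)"
      using N hom_mod_smult[OF assms(3) \<open>a \<in> carrier R\<close>] by (simp add: subsetD)
    then show "smult Y a x \<in> f ` N" by (simp add: b submod_smult[OF assms(4) \<open>a \<in> carrier R\<close>])
  qed (use N in auto)
qed

lemma submod_preimage:
  assumes "lmodule R X" "lmodule R Y" "hom_mod R X Y f" "submod R Y N"
  shows "submod R X {x \<in> carrier X. f x \<in> N}"
proof -
  interpret abelian_group_hom X Y f
    using assms(1-3) by (intro hom_mod_abelian_group_hom lmodule_abelian_group)
  show ?thesis unfolding submod_def
  proof (intro conjI ballI)
    fix x y assume "x \<in> {x \<in> carrier X. f x \<in> N}" "y \<in> {x \<in> carrier X. f x \<in> N}"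
    then show "x \<oplus>\<^bsub>X\<^esub> y \<in> {x \<in> carrier X. f x \<in> N}"
      using submod_add[OF assms(4)] by simp
  next
    fix x assume "x \<in> {x \<in> carrier X. f x \<in> N}"
    then show "\<ominus>\<^bsub>X\<^esub> x \<in> {x \<in> carrier X. f x \<in> N}"
      using submod_a_inv[OF assms(4)] by simp
  next
    fix a x assume "a \<in> carrier R" "x \<in> {x \<in> carrier X. f x \<in> N}"
    then show "smult X a x \<in> {x \<in> carrier X. f x \<in> N}"
      using submod_smult[OF assms(4)] hom_mod_smult[OF assms(3)] lmodule_smult_closed[OF assms(1)]
      by simp
  qed (use submod_zero[OF assms(4)] in auto)
qed

section \<open>The product N\<cdot>X\<close>

lemma submod_zero_singleton:
  assumes "lmodule R W" shows "submod R W {\<zero>\<^bsub>W\<^esub>}"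
proof -
  interpret abelian_group W using assms by (rule lmodule_abelian_group)
  show ?thesis by (simp add: submod_def lmodule_smult_zero[OF assms])
qed

lemma submod_kernel_mod:
  assumes "lmodule R X" "lmodule R W" "hom_mod R X W f"
  shows "submod R X (kernel_mod X W f)"
  using submod_preimage[OF assms submod_zero_singleton[OF assms(2)]] by (simp add: kernel_mod_def)

lemma prod_dot_subset: "prod_dot R M N X \<subseteq> carrier X"
  by (simp add: prod_dot_def)

lemma submod_prod_dot:
  fixes X :: "('r, 'x) module"
  assumes "lmodule R X"
  shows "submod R X (prod_dot R M N X)"
  unfolding prod_dot_def Inter_insert[symmetric]
  by (rule submod_Inter) (auto intro: submod_carrier[OF assms] submod_kernel_mod[OF assms])

lemma prod_dotI:
  fixes X :: "('r, 'x) module"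
  assumes "x \<in> carrier X"
    and "\<And>(W :: ('r, 'x set) module) f. \<lbrakk>lmodule R W; \<forall>g. hom_mod R M W g \<longrightarrow> (\<forall>n\<in>N. g n = \<zero>\<^bsub>W\<^esub>);
      hom_mod R X W f\<rbrakk> \<Longrightarrow> f x = \<zero>\<^bsub>W\<^esub>"
  shows "x \<in> prod_dot R M N X"
  using assms unfolding prod_dot_def kernel_mod_def by blast

lemma prod_dotD:
  fixes X :: "('r, 'x) module" and W :: "('r, 'x set) module"
  assumes "x \<in> prod_dot R M N X" "lmodule R W" "\<forall>g. hom_mod R M W g \<longrightarrow> (\<forall>n\<in>N. g n = \<zero>\<^bsub>W\<^esub>)"
    and "hom_mod R X W f"
  shows "f x = \<zero>\<^bsub>W\<^esub>"
  using assms unfolding prod_dot_def kernel_mod_def by blast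

lemma prod_dot_hom_image:
  fixes X Y :: "('r, 'x) module"
  assumes "hom_mod R X Y f"
  shows "f ` prod_dot R M N X \<subseteq> prod_dot R M N Y"
proof
  fix y assume "y \<in> f ` prod_dot R M N X"
  then obtain x where x: "x \<in> prod_dot R M N X" "y = f x" by blast
  show "y \<in> prod_dot R M N Y"
  proof (rule prod_dotI)
    show "y \<in> carrier Y" using x prod_dot_subset[of R M N X] hom_mod_closed[OF assms] by auto
  next
    fix W :: "('r, 'x set) module" and h
    assume "lmodule R W" "\<forall>g. hom_mod R M W g \<longrightarrow> (\<forall>n\<in>N. g n = \<zero>\<^bsub>W\<^esub>)" "hom_mod R Y W h"
    then show "h y = \<zero>\<^bsub>W\<^esub>" using prod_dotD[OF x(1) _ _ hom_mod_comp[OF assms]] x(2) by blast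
  qed
qed

lemma prod_dot_restr_subset:
  "Z \<subseteq> carrier X \<Longrightarrow> prod_dot R M N (restr X Z) \<subseteq> prod_dot R M N X"
  using prod_dot_hom_image[OF hom_mod_restr_dom[OF hom_mod_id]] by fastforce

lemma hom_mod_image_in_prod_dot:
  fixes Y :: "('r, 'x) module"
  assumes "hom_mod R M Y k" "n \<in> N" "N \<subseteq> carrier M"
  shows "k n \<in> prod_dot R M N Y"
proof (rule prod_dotI)
  show "k n \<in> carrier Y" using hom_mod_closed[OF assms(1)] assms(2,3) by blast
next
  fix W :: "('r, 'x set) module" and h
  assume "\<forall>g. hom_mod R M W g \<longrightarrow> (\<forall>n\<in>N. g n = \<zero>\<^bsub>W\<^esub>)" "hom_mod R Y W h"
  then show "h (k n) = \<zero>\<^bsub>W\<^esub>" using hom_mod_comp[OF assms(1)] assms(2) by blast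
qed

section \<open>Quotient modules\<close>

lemma lmodule_surj_image:
  fixes Q :: "('r, 'b) module"
  assumes X: "lmodule R X" and surj: "p ` carrier X = carrier Q"
    and add: "\<And>x y. \<lbrakk>x \<in> carrier X; y \<in> carrier X\<rbrakk> \<Longrightarrow> p x \<oplus>\<^bsub>Q\<^esub> p y = p (x \<oplus>\<^bsub>X\<^esub> y)"
    and zero: "\<zero>\<^bsub>Q\<^esub> = p \<zero>\<^bsub>X\<^esub>"
    and smult: "\<And>a x. \<lbrakk>a \<in> carrier R; x \<in> carrier X\<rbrakk> \<Longrightarrow> smult Q a (p x) = p (smult X a x)"
  shows "lmodule R Q"
proof -
  interpret abelian_group X using X by (rule lmodule_abelian_group)
  interpret R: ring R using X by (rule lmodule_ring)
  have closed: "p x \<in> carrier Q" if "x \<in> carrier X" for x using that surj by blast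
  have preimage: "\<exists>x\<in>carrier X. u = p x" if "u \<in> carrier Q" for u using that surj by blast
  note laws = add zero smult closed l_neg lmodule_smult_closed[OF X] lmodule_add_smult[OF X]
    lmodule_smult_add[OF X] lmodule_smult_assoc[OF X] lmodule_smult_one[OF X]
  have "abelian_group Q"
  proof (rule abelian_groupI)
    fix u assume "u \<in> carrier Q"
    then obtain x where x: "x \<in> carrier X" "u = p x" using preimage by blast
    then show "\<exists>v\<in>carrier Q. v \<oplus>\<^bsub>Q\<^esub> u = \<zero>\<^bsub>Q\<^esub>"
      by (intro bexI[of _ "p (\<ominus>\<^bsub>X\<^esub> x)"]) (simp_all add: laws)
  qed (auto dest!: preimage simp: laws a_ac)
  moreover have "\<forall>a\<in>carrier R. \<forall>u\<in>carrier Q. smult Q a u \<in> carrier Q"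
    and "\<forall>a\<in>carrier R. \<forall>b\<in>carrier R. \<forall>u\<in>carrier Q.
      smult Q (a \<oplus>\<^bsub>R\<^esub> b) u = smult Q a u \<oplus>\<^bsub>Q\<^esub> smult Q b u"
    and "\<forall>a\<in>carrier R. \<forall>u\<in>carrier Q. \<forall>v\<in>carrier Q.
      smult Q a (u \<oplus>\<^bsub>Q\<^esub> v) = smult Q a u \<oplus>\<^bsub>Q\<^esub> smult Q a v"
    and "\<forall>a\<in>carrier R. \<forall>b\<in>carrier R. \<forall>u\<in>carrier Q.
      smult Q (a \<otimes>\<^bsub>R\<^esub> b) u = smult Q a (smult Q b u)"
    and "\<forall>u\<in>carrier Q. smult Q \<one>\<^bsub>R\<^esub> u = u"
    by (auto dest!: preimage simp: laws)
  ultimately show ?thesis using R.ring_axioms by (simp add: lmodule_def)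
qed

lemma submod_abelian_subgroup:
  assumes "abelian_group X" "submod R X K"
  shows "abelian_subgroup K X"
  using assms
  by (intro abelian_subgroupI3 additive_subgroupI subgroup.intro)
    (auto simp: submod_def simp flip: a_inv_def)

definition coset_rep :: "('a, 'm) ring_scheme \<Rightarrow> 'a set \<Rightarrow> 'a \<Rightarrow> 'a" where
  "coset_rep X K x = (SOME y. y \<in> K +>\<^bsub>X\<^esub> x)"

context abelian_subgroup
begin

lemma coset_rep_in_coset: "x \<in> carrier G \<Longrightarrow> coset_rep G H x \<in> H +> x"
  unfolding coset_rep_def by (rule someI) (rule a_rcos_self)

lemma coset_rep_closed: "x \<in> carrier G \<Longrightarrow> coset_rep G H x \<in> carrier G"
  by (rule a_elemrcos_carrier[OF _ coset_rep_in_coset])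

lemma coset_rep_coset: "x \<in> carrier G \<Longrightarrow> H +> coset_rep G H x = H +> x"
  by (rule a_repr_independence'[OF coset_rep_in_coset, symmetric])

lemma coset_rep_eq_iff:
  "\<lbrakk>x \<in> carrier G; y \<in> carrier G\<rbrakk> \<Longrightarrow> coset_rep G H x = coset_rep G H y \<longleftrightarrow> H +> x = H +> y"
  by (metis coset_rep_coset coset_rep_def)

lemma a_rcos_eq_iff:
  "\<lbrakk>x \<in> carrier G; y \<in> carrier G\<rbrakk> \<Longrightarrow> H +> x = H +> y \<longleftrightarrow> x \<oplus> \<ominus> y \<in> H"
  by (metis a_rcos_module a_repr_independence' a_repr_independenceD)

lemma a_rcos_eq_self_iff: "x \<in> carrier G \<Longrightarrow> H +> x = H \<longleftrightarrow> x \<in> H"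
  by (metis a_rcos_const a_rcos_self)

end

text \<open>The quotient of X by a submodule K is carried by representatives of the cosets, moved into
  an arbitrary type along an injection i: the product N\<cdot>X and projectivity in \<sigma>[M] quantify
  over modules of fixed carrier types, so quotients are needed inside such types. The fields
  mult and one are irrelevant for modules.\<close>

definition quotient_map :: "('r, 'a) module \<Rightarrow> 'a set \<Rightarrow> ('a \<Rightarrow> 'b) \<Rightarrow> 'a \<Rightarrow> 'b" where
  "quotient_map X K i x = i (coset_rep X K x)"

definition quotient_mod :: "('r, 'a) module \<Rightarrow> 'a set \<Rightarrow> ('a \<Rightarrow> 'b) \<Rightarrow> ('r, 'b) module" where
  "quotient_mod X K i =
    \<lparr>carrier = quotient_map X K i ` carrier X, mult = (\<lambda>a b. a), one = quotient_map X K i \<zero>\<^bsub>X\<^esub>,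
     zero = quotient_map X K i \<zero>\<^bsub>X\<^esub>,
     add = (\<lambda>a b. quotient_map X K i (inv_into UNIV i a \<oplus>\<^bsub>X\<^esub> inv_into UNIV i b)),
     smult = (\<lambda>r a. quotient_map X K i (smult X r (inv_into UNIV i a)))\<rparr>"

context
  fixes R :: "('r, 'c) ring_scheme" and X :: "('r, 'a) module" and K :: "'a set"
    and i :: "'a \<Rightarrow> 'b"
  assumes X: "lmodule R X" and K: "submod R X K" and i: "inj i"
begin

interpretation abelian_subgroup K X
  using lmodule_abelian_group[OF X] K by (rule submod_abelian_subgroup)

lemma quotient_map_eq_iff:
  "\<lbrakk>x \<in> carrier X; y \<in> carrier X\<rbrakk> \<Longrightarrow>
    quotient_map X K i x = quotient_map X K i y \<longleftrightarrow> K +>\<^bsub>X\<^esub> x = K +>\<^bsub>X\<^esub> y"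
  unfolding quotient_map_def by (simp add: inj_eq[OF i] coset_rep_eq_iff)

lemma quotient_map_eq_zero_iff:
  "x \<in> carrier X \<Longrightarrow> quotient_map X K i x = quotient_map X K i \<zero>\<^bsub>X\<^esub> \<longleftrightarrow> x \<in> K"
  by (simp add: quotient_map_eq_iff a_rcos_const a_rcos_eq_self_iff)

lemma inv_into_quotient_map: "inv_into UNIV i (quotient_map X K i x) = coset_rep X K x"
  by (simp add: quotient_map_def i)

lemma quotient_mod_add:
  assumes "x \<in> carrier X" "y \<in> carrier X"
  shows "quotient_map X K i x \<oplus>\<^bsub>quotient_mod X K i\<^esub> quotient_map X K i y =
    quotient_map X K i (x \<oplus>\<^bsub>X\<^esub> y)"
proof -
  have "K +>\<^bsub>X\<^esub> (coset_rep X K x \<oplus>\<^bsub>X\<^esub> coset_rep X K y) = K +>\<^bsub>X\<^esub> (x \<oplus>\<^bsub>X\<^esub> y)"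
    using assms by (simp add: coset_rep_closed coset_rep_coset flip: a_rcos_sum)
  then show ?thesis
    using assms by (simp add: quotient_mod_def inv_into_quotient_map quotient_map_eq_iff coset_rep_closed)
qed

lemma quotient_mod_smult:
  assumes "a \<in> carrier R" "x \<in> carrier X"
  shows "smult (quotient_mod X K i) a (quotient_map X K i x) = quotient_map X K i (smult X a x)"
proof -
  interpret smult: abelian_group_hom X X "smult X a" using X assms(1) by (rule smult_abelian_group_hom)
  have "coset_rep X K x \<oplus>\<^bsub>X\<^esub> \<ominus>\<^bsub>X\<^esub> x \<in> K"
    using assms(2) by (simp add: coset_rep_closed coset_rep_coset flip: a_rcos_eq_iff)
  then have "smult X a (coset_rep X K x) \<oplus>\<^bsub>X\<^esub> \<ominus>\<^bsub>X\<^esub> smult X a x \<in> K"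
    using assms K by (simp add: coset_rep_closed submod_smult flip: smult.hom_add smult.hom_a_inv)
  then show ?thesis
    using assms lmodule_smult_closed[OF X]
    by (simp add: quotient_mod_def inv_into_quotient_map quotient_map_eq_iff coset_rep_closed a_rcos_eq_iff)
qed

lemma quotient_mod_lmodule: "lmodule R (quotient_mod X K i)"
  and quotient_map_hom: "hom_mod R X (quotient_mod X K i) (quotient_map X K i)"
  and quotient_map_surj: "quotient_map X K i ` carrier X = carrier (quotient_mod X K i)"
proof -
  show surj: "quotient_map X K i ` carrier X = carrier (quotient_mod X K i)"
    by (simp add: quotient_mod_def)
  show "lmodule R (quotient_mod X K i)"
    by (rule lmodule_surj_image[OF X surj quotient_mod_add _ quotient_mod_smult])
      (simp_all add: quotient_mod_def)
  show "hom_mod R X (quotient_mod X K i) (quotient_map X K i)"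
    using surj quotient_mod_add quotient_mod_smult by (auto simp: hom_mod_def)
qed

end

section \<open>Modules in \<sigma>[M] and projectivity\<close>

lemma span_mod_least: "\<lbrakk>submod R Y N; S \<subseteq> N\<rbrakk> \<Longrightarrow> span_mod R Y S \<subseteq> N"
  by (auto simp: span_mod_def)

lemma Mgen_surj_image:
  assumes G: "lmodule R G" "Mgen R M G" and Q: "lmodule R Q"
    and p: "hom_mod R G Q p" "p ` carrier G = carrier Q"
  shows "Mgen R M Q"
proof -
  let ?S = "\<Union> {f ` carrier M | f. hom_mod R M Q f}"
  have least: "carrier Q \<subseteq> N" if N: "submod R Q N" "?S \<subseteq> N" for N
  proof -
    have "\<Union> {f ` carrier M | f. hom_mod R M G f} \<subseteq> {x \<in> carrier G. p x \<in> N}"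
    proof
      fix y assume "y \<in> \<Union> {f ` carrier M | f. hom_mod R M G f}"
      then obtain f m where f: "hom_mod R M G f" "m \<in> carrier M" "y = f m" by blast
      have "(\<lambda>x. p (f x)) ` carrier M \<in> {f ` carrier M | f. hom_mod R M Q f}"
        using hom_mod_comp[OF f(1) p(1)] by (intro CollectI exI[of _ "\<lambda>x. p (f x)"]) simp
      then have "p y \<in> ?S" by (rule UnionI) (simp add: f(2,3))
      then show "y \<in> {x \<in> carrier G. p x \<in> N}" using N(2) f hom_mod_closed[OF f(1)] by auto
    qed
    then have "span_mod R G (\<Union> {f ` carrier M | f. hom_mod R M G f}) \<subseteq> {x \<in> carrier G. p x \<in> N}"
      by (rule span_mod_least[OF submod_preimage[OF G(1) Q p(1) N(1)]])
    then have "carrier G \<subseteq> {x \<in> carrier G. p x \<in> N}"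
      using G(2) unfolding Mgen_def by (rule ord_eq_le_trans[rotated])
    then show ?thesis unfolding p(2)[symmetric] by blast
  qed
  have "?S \<subseteq> carrier Q" by (auto dest: hom_mod_closed)
  then have "span_mod R Q ?S \<subseteq> carrier Q" by (rule span_mod_least[OF submod_carrier[OF Q]])
  moreover have "carrier Q \<subseteq> span_mod R Q ?S"
    unfolding span_mod_def by (intro Inter_greatest) (simp add: least)
  ultimately show ?thesis unfolding Mgen_def by (rule equalityI[rotated])
qed

lemma in_sigma_submod_Mgen:
  fixes G :: "('r, 'u) module"
  assumes "lmodule R G" "Mgen R M G" "submod R G N"
  shows "in_sigma TYPE('u) R M (restr G N)"
  unfolding in_sigma_def
  by (intro exI[of _ G] exI[of _ N] exI[of _ "\<lambda>x. x"]) (simp add: assms hom_mod_id bij_betw_def)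

lemma in_sigma_submod:
  fixes X :: "('r, 'x) module"
  assumes X: "lmodule R X" "in_sigma TYPE('u) R M X" and Z: "submod R X Z"
  shows "in_sigma TYPE('u) R M (restr X Z)"
proof -
  obtain G :: "('r, 'u) module" and N \<phi> where
    G: "lmodule R G" "Mgen R M G" "submod R G N" and
    \<phi>: "hom_mod R X (restr G N) \<phi>" "bij_betw \<phi> (carrier X) N"
    using X(2) unfolding in_sigma_def by blast
  have \<phi>G: "hom_mod R X G \<phi>" using \<phi>(1) hom_mod_restr_cod_iff[OF submod_subset[OF G(3)]] by blast
  have "submod R G (\<phi> ` Z)"
    by (rule submod_image[OF lmodule_abelian_group[OF X(1)] lmodule_abelian_group[OF G(1)] \<phi>G Z])
  moreover have "hom_mod R (restr X Z) (restr G (\<phi> ` Z)) \<phi>"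
    using submod_subset[OF Z] by (intro hom_mod_restr_cod hom_mod_restr_dom[OF \<phi>G]) auto
  moreover have "bij_betw \<phi> Z (\<phi> ` Z)"
    using \<phi>(2) submod_subset[OF Z] by (auto simp: bij_betw_def intro: inj_on_subset)
  ultimately show ?thesis
    unfolding in_sigma_def using G(1,2) by (intro exI[of _ G] exI[of _ "\<phi> ` Z"] exI[of _ \<phi>]) simp
qed

lemma hom_mod_factor:
  assumes A: "lmodule R A" and q: "hom_mod R A B q" "q ` carrier A = carrier B"
    and c': "hom_mod R A W c'" and factor: "\<And>a. a \<in> carrier A \<Longrightarrow> c (q a) = c' a"
  shows "hom_mod R B W c"
  unfolding hom_mod_def q(2)[symmetric]
proof (intro conjI ballI)
  show "c \<in> q ` carrier A \<rightarrow> carrier W"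
    using factor hom_mod_closed[OF c'] by auto
next
  fix b1 b2 assume "b1 \<in> q ` carrier A" "b2 \<in> q ` carrier A"
  then obtain a1 a2 where a: "a1 \<in> carrier A" "a2 \<in> carrier A" "b1 = q a1" "b2 = q a2" by blast
  moreover have "a1 \<oplus>\<^bsub>A\<^esub> a2 \<in> carrier A"
    using a abelian_group.axioms(1)[OF lmodule_abelian_group[OF A]] by (simp add: abelian_monoid.a_closed)
  ultimately show "c (b1 \<oplus>\<^bsub>B\<^esub> b2) = c b1 \<oplus>\<^bsub>W\<^esub> c b2"
    by (simp add: hom_mod_add[OF q(1), symmetric] factor hom_mod_add[OF c'])
next
  fix r b assume "r \<in> carrier R" "b \<in> q ` carrier A"
  then obtain a where "a \<in> carrier A" "b = q a" by blast
  then show "c (smult B r b) = smult W r (c b)"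
    using \<open>r \<in> carrier R\<close> lmodule_smult_closed[OF A]
    by (simp add: hom_mod_smult[OF q(1), symmetric] factor hom_mod_smult[OF c'])
qed

context
  fixes R :: "('r, 'c) ring_scheme" and G :: "('r, 'a) module" and N :: "'a set"
    and W :: "('r, 'w) module" and c :: "'a \<Rightarrow> 'w"
  assumes G: "lmodule R G" and N: "submod R G N" and W: "lmodule R W"
    and c: "hom_mod R (restr G N) W c"
begin

abbreviation (input) ker where "ker \<equiv> kernel_mod (restr G N) W c"

interpretation G: abelian_group G using G by (rule lmodule_abelian_group)
interpretation W: abelian_group W using W by (rule lmodule_abelian_group)
interpretation c: abelian_group_hom "restr G N" W c
  using submod_abelian_group[OF G.abelian_group_axioms N] W.abelian_group_axioms c
  by (rule hom_mod_abelian_group_hom)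

lemma submod_kernel_restr: "submod R G ker" "ker \<subseteq> N"
  using submod_kernel_mod[OF submod_lmodule[OF G N] W c] submod_restr_iff[OF G.abelian_group_axioms N]
  by (auto simp: kernel_mod_def)

interpretation K: abelian_subgroup ker G
  using G.abelian_group_axioms submod_kernel_restr(1) by (rule submod_abelian_subgroup)

lemma coset_rep_kernel:
  assumes "a \<in> N"
  shows "coset_rep G ker a \<in> N" and "c (coset_rep G ker a) = c a"
proof -
  obtain k where k: "k \<in> ker" "coset_rep G ker a = k \<oplus>\<^bsub>G\<^esub> a"
    using K.coset_rep_in_coset[of a] assms submod_subset[OF N] unfolding a_r_coset_def' by auto
  then show "coset_rep G ker a \<in> N"
    using assms submod_kernel_restr(2) submod_add[OF N] by auto
  have "c k = \<zero>\<^bsub>W\<^esub>" using k(1) by (simp add: kernel_mod_def)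
  then show "c (coset_rep G ker a) = c a"
    using k assms submod_kernel_restr(2) c.hom_add[of k a] c.hom_closed[of a] by auto
qed

lemma coset_rep_kernel_eq_iff:
  assumes "a1 \<in> N" "a2 \<in> N"
  shows "coset_rep G ker a1 = coset_rep G ker a2 \<longleftrightarrow> c a1 = c a2"
proof
  assume "c a1 = c a2"
  then have "c (a1 \<oplus>\<^bsub>G\<^esub> \<ominus>\<^bsub>G\<^esub> a2) = \<zero>\<^bsub>W\<^esub>"
    using assms c.hom_add[of a1 "\<ominus>\<^bsub>G\<^esub> a2"] c.hom_a_inv[of a2] c.hom_closed[of a2]
    by (simp add: restr_a_inv[OF G.abelian_group_axioms N] submod_a_inv[OF N] W.r_neg)
  then have "a1 \<oplus>\<^bsub>G\<^esub> \<ominus>\<^bsub>G\<^esub> a2 \<in> ker"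
    using assms by (simp add: kernel_mod_def submod_add[OF N] submod_a_inv[OF N])
  moreover have "a1 \<in> carrier G" "a2 \<in> carrier G" using assms submod_subset[OF N] by auto
  ultimately show "coset_rep G ker a1 = coset_rep G ker a2"
    by (simp add: K.coset_rep_eq_iff K.a_rcos_eq_iff)
qed (metis assms coset_rep_kernel(2))

end

text \<open>The copy is G/ker c restricted to the image of N; the isomorphism is c itself, because the
  coset representatives of elements of N stay in N.\<close>

lemma epimorphic_image_in_sigma:
  fixes G :: "('r, 'u) module" and W :: "('r, 'w) module"
  assumes G: "lmodule R G" "Mgen R M G" and N: "submod R G N" and W: "lmodule R W"
    and c: "hom_mod R (restr G N) W c" "c ` N = carrier W"
  obtains B :: "('r, 'u) module" and q where "lmodule R B" "in_sigma TYPE('u) R M B"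
    "hom_mod R (restr G N) B q" "q ` N = carrier B"
    "hom_mod R B W c" "bij_betw c (carrier B) (carrier W)" "\<And>a. a \<in> N \<Longrightarrow> c (q a) = c a"
proof -
  let ?K = "kernel_mod (restr G N) W c"
  define Q where "Q = quotient_mod G ?K id"
  define q where "q = quotient_map G ?K id"
  have Q: "lmodule R Q" "hom_mod R G Q q" "q ` carrier G = carrier Q"
    unfolding Q_def q_def using G(1) submod_kernel_restr(1)[OF G(1) N W c(1)] inj_on_id[of UNIV]
    by (simp_all add: quotient_mod_lmodule quotient_map_hom quotient_map_surj)
  have q: "q a = coset_rep G ?K a" for a by (simp add: q_def quotient_map_def)
  have NG: "N \<subseteq> carrier G" using N by (rule submod_subset)
  have agG: "abelian_group G" and agQ: "abelian_group Q"
    using G(1) Q(1) by (simp_all add: lmodule_abelian_group)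
  define B where "B = restr Q (q ` N)"
  have subB: "submod R Q (q ` N)" by (rule submod_image[OF agG agQ Q(2) N])
  have B: "lmodule R B" "in_sigma TYPE('u) R M B" "q ` N = carrier B"
    unfolding B_def using subB Q(1) Mgen_surj_image[OF G Q]
    by (simp_all add: submod_lmodule in_sigma_submod_Mgen)
  have qB: "hom_mod R (restr G N) B q"
    unfolding B_def by (rule hom_mod_restr_cod[OF hom_mod_restr_dom[OF Q(2) NG]]) simp
  have cq: "c (q a) = c a" if "a \<in> N" for a
    using coset_rep_kernel(2)[OF G(1) N W c(1) that] by (simp add: q)
  have "hom_mod R B W c"
    by (rule hom_mod_factor[OF submod_lmodule[OF G(1) N] qB _ c(1)]) (simp_all add: B(3) cq)
  moreover have "bij_betw c (carrier B) (carrier W)"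
    unfolding bij_betw_def
  proof
    show "inj_on c (carrier B)"
      using coset_rep_kernel_eq_iff[OF G(1) N W c(1)] cq by (auto simp: inj_on_def q simp flip: B(3))
    have "c ` carrier B = (\<lambda>a. c (q a)) ` N" by (simp add: image_image flip: B(3))
    also have "\<dots> = carrier W" using cq c(2) by (simp cong: image_cong)
    finally show "c ` carrier B = carrier W" .
  qed
  ultimately show ?thesis using that B qB cq by blast
qed

text \<open>Projectivity is only postulated for modules with carrier type 'u; the lift to arbitrary
  Y and W goes through the copy of W provided by the previous lemma.\<close>

lemma proj_sigma_lift:
  fixes Y :: "('r, 'x) module" and W :: "('r, 'w) module"
  assumes proj: "proj_sigma TYPE('u) R M" and Y: "lmodule R Y" "in_sigma TYPE('u) R M Y"
    and W: "lmodule R W" and c: "hom_mod R Y W c" "c ` carrier Y = carrier W"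
    and g: "hom_mod R M W g"
  obtains h where "hom_mod R M Y h" "\<And>m. m \<in> carrier M \<Longrightarrow> c (h m) = g m"
proof -
  obtain G :: "('r, 'u) module" and N \<phi> where
    G: "lmodule R G" "Mgen R M G" and N: "submod R G N" and
    \<phi>: "hom_mod R Y (restr G N) \<phi>" "bij_betw \<phi> (carrier Y) N"
    using Y(2) unfolding in_sigma_def by blast
  define \<psi> where "\<psi> = inv_into (carrier Y) \<phi>"
  have \<psi>: "hom_mod R (restr G N) Y \<psi>" "\<psi> ` N = carrier Y"
    using hom_mod_inv_into[OF Y(1) \<phi>(1)] \<phi>(2) bij_betw_inv_into[OF \<phi>(2)]
    by (simp_all add: \<psi>_def bij_betw_def)
  have c\<psi>: "hom_mod R (restr G N) W (\<lambda>a. c (\<psi> a))" "(\<lambda>a. c (\<psi> a)) ` N = carrier W"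
    using hom_mod_comp[OF \<psi>(1) c(1)] \<psi>(2) c(2) by (simp_all flip: image_image)
  obtain B :: "('r, 'u) module" and q where B: "lmodule R B" "in_sigma TYPE('u) R M B"
    and q: "hom_mod R (restr G N) B q" "q ` N = carrier B"
    and iso: "hom_mod R B W (\<lambda>a. c (\<psi> a))" "bij_betw (\<lambda>a. c (\<psi> a)) (carrier B) (carrier W)"
    and c\<psi>q: "\<And>a. a \<in> N \<Longrightarrow> c (\<psi> (q a)) = c (\<psi> a)"
    by (rule epimorphic_image_in_sigma[OF G N W c\<psi>]) simp
  define f where "f m = inv_into (carrier B) (\<lambda>a. c (\<psi> a)) (g m)" for m
  have f: "hom_mod R M B f"
    unfolding f_def by (rule hom_mod_comp[OF g hom_mod_inv_into[OF B(1) iso]])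
  have "\<exists>h. hom_mod R M (restr G N) h \<and> (\<forall>m\<in>carrier M. q (h m) = f m)"
    using submod_lmodule[OF G(1) N] B in_sigma_submod_Mgen[OF G N] q f
    by (intro proj[unfolded proj_sigma_def, rule_format]) simp
  then obtain h where h: "hom_mod R M (restr G N) h" "\<And>m. m \<in> carrier M \<Longrightarrow> q (h m) = f m"
    by blast
  show ?thesis
  proof (rule that[of "\<lambda>m. \<psi> (h m)"])
    show "hom_mod R M Y (\<lambda>m. \<psi> (h m))" using h(1) \<psi>(1) by (rule hom_mod_comp)
  next
    fix m assume m: "m \<in> carrier M"
    have "g m \<in> (\<lambda>a. c (\<psi> a)) ` carrier B"
      using iso(2) hom_mod_closed[OF g m] by (simp add: bij_betw_def)
    then have "c (\<psi> (f m)) = g m" unfolding f_def by (rule f_inv_into_f)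
    then show "c (\<psi> (h m)) = g m"
      using c\<psi>q[OF hom_mod_closed[OF h(1) m, simplified]] h(2)[OF m] by simp
  qed
qed

text \<open>The inclusion from right to left is where projectivity enters: N\<cdot>Y' is killed by the
  quotient map Y' \<rightarrow> Y'/e(N\<cdot>Y), because every homomorphism M \<rightarrow> Y'/e(N\<cdot>Y) lifts to Y.\<close>

lemma prod_dot_surj_image:
  fixes Y Y' :: "('r, 'x) module"
  assumes proj: "proj_sigma TYPE('u) R M" and Y: "lmodule R Y" "in_sigma TYPE('u) R M Y"
    and Y': "lmodule R Y'" and e: "hom_mod R Y Y' e" "e ` carrier Y = carrier Y'"
    and N: "N \<subseteq> carrier M"
  shows "e ` prod_dot R M N Y = prod_dot R M N Y'"
proof
  show "e ` prod_dot R M N Y \<subseteq> prod_dot R M N Y'" using e(1) by (rule prod_dot_hom_image)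
next
  define K where "K = e ` prod_dot R M N Y"
  have K: "submod R Y' K"
    unfolding K_def using lmodule_abelian_group[OF Y(1)] lmodule_abelian_group[OF Y'] e(1)
      submod_prod_dot[OF Y(1)] by (rule submod_image)
  have inj: "inj (\<lambda>x::'x. {x})" by simp
  define W where "W = quotient_mod Y' K (\<lambda>x. {x})"
  define w where "w = quotient_map Y' K (\<lambda>x. {x})"
  have W: "lmodule R W" "hom_mod R Y' W w" "w ` carrier Y' = carrier W"
    unfolding W_def w_def using Y' K inj
    by (simp_all add: quotient_mod_lmodule quotient_map_hom quotient_map_surj)
  have w_zero: "w y = \<zero>\<^bsub>W\<^esub> \<longleftrightarrow> y \<in> K" if "y \<in> carrier Y'" for y
    using quotient_map_eq_zero_iff[OF Y' K inj that] by (simp add: W_def w_def quotient_mod_def)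
  have c: "hom_mod R Y W (\<lambda>y. w (e y))" "(\<lambda>y. w (e y)) ` carrier Y = carrier W"
    using hom_mod_comp[OF e(1) W(2)] e(2) W(3) by (simp_all flip: image_image)
  have vanish: "\<forall>g. hom_mod R M W g \<longrightarrow> (\<forall>n\<in>N. g n = \<zero>\<^bsub>W\<^esub>)"
  proof (intro allI impI ballI)
    fix g n assume g: "hom_mod R M W g" and n: "n \<in> N"
    obtain h where h: "hom_mod R M Y h" "\<And>m. m \<in> carrier M \<Longrightarrow> w (e (h m)) = g m"
      by (rule proj_sigma_lift[OF proj Y W(1) c g]) simp
    have "e (h n) \<in> K" unfolding K_def using hom_mod_image_in_prod_dot[OF h(1) n N] by (rule imageI)
    moreover have "n \<in> carrier M" using n N by auto
    then have "g n = w (e (h n))" "e (h n) \<in> carrier Y'"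
      using h(2) hom_mod_closed[OF e(1) hom_mod_closed[OF h(1)]] by auto
    ultimately show "g n = \<zero>\<^bsub>W\<^esub>" using w_zero by simp
  qed
  show "prod_dot R M N Y' \<subseteq> e ` prod_dot R M N Y"
  proof
    fix y assume y: "y \<in> prod_dot R M N Y'"
    then have "w y = \<zero>\<^bsub>W\<^esub>" by (rule prod_dotD[OF _ W(1) vanish W(2)])
    then show "y \<in> e ` prod_dot R M N Y"
      using w_zero y prod_dot_subset[of R M N Y'] by (auto simp: K_def)
  qed
qed

section \<open>M-prime submodules and the M-radical\<close>

lemma radM_eq: "radM R M X = {x \<in> carrier X. \<forall>P. M_prime R M X P \<longrightarrow> x \<in> P}"
proof (cases "\<exists>P. M_prime R M X P")
  case True
  then obtain P where "M_prime R M X P" by blast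
  then have "P \<subseteq> carrier X" using submod_subset[of R X P] by (simp add: M_prime_def)
  moreover have "\<Inter> {P. M_prime R M X P} \<subseteq> P" using \<open>M_prime R M X P\<close> by (simp add: Inter_lower)
  ultimately have "\<Inter> {P. M_prime R M X P} \<subseteq> carrier X" by (rule subset_trans[rotated])
  then show ?thesis using True by (auto simp: radM_def)
qed (simp add: radM_def)

lemma submod_radM:
  assumes "lmodule R X" shows "submod R X (radM R M X)"
proof -
  have "radM R M X = \<Inter> (insert (carrier X) {P. M_prime R M X P})" by (auto simp: radM_eq)
  moreover have "submod R X (\<Inter> (insert (carrier X) {P. M_prime R M X P}))"
    by (rule submod_Inter) (auto simp: M_prime_def submod_carrier[OF assms])
  ultimately show ?thesis by simp
qed

lemma M_primeD:
  "\<lbrakk>M_prime R M X P; submod R M N; submod R X Z; prod_dot R M N (restr X Z) \<subseteq> P\<rbrakk> \<Longrightarrow>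
    prod_dot R M N X \<subseteq> P \<or> Z \<subseteq> P"
  unfolding M_prime_def by blast

lemma M_prime_restr:
  fixes X :: "('r, 'x) module"
  assumes X: "lmodule R X" and P: "M_prime R M X P" and Z: "submod R X Z" and "\<not> Z \<subseteq> P"
  shows "M_prime R M (restr X Z) (P \<inter> Z)"
  unfolding M_prime_def
proof (intro conjI allI impI)
  have agX: "abelian_group X" using X by (rule lmodule_abelian_group)
  show "submod R (restr X Z) (P \<inter> Z)"
    using P Z by (simp add: submod_restr_iff[OF agX Z] submod_Int M_prime_def)
  show "P \<inter> Z \<noteq> carrier (restr X Z)" using \<open>\<not> Z \<subseteq> P\<close> by auto
  fix N Z' assume N: "submod R M N" and Z': "submod R (restr X Z) Z'"
    and sub: "prod_dot R M N (restr (restr X Z) Z') \<subseteq> P \<inter> Z"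
  have "submod R X Z'" "Z' \<subseteq> Z" using Z' by (simp_all add: submod_restr_iff[OF agX Z])
  moreover have "prod_dot R M N (restr X Z') \<subseteq> P" using sub by simp
  ultimately have "prod_dot R M N X \<subseteq> P \<or> Z' \<subseteq> P" using M_primeD[OF P N] by blast
  then show "prod_dot R M N (restr X Z) \<subseteq> P \<inter> Z \<or> Z' \<subseteq> P \<inter> Z"
    using prod_dot_restr_subset[OF submod_subset[OF Z], where R = R and M = M and N = N]
      prod_dot_subset[of R M N "restr X Z"] \<open>Z' \<subseteq> Z\<close> by auto
qed

lemma radM_restr_subset:
  fixes X :: "('r, 'x) module"
  assumes X: "lmodule R X" and Z: "submod R X Z"
  shows "radM R M (restr X Z) \<subseteq> radM R M X"
proof
  fix x assume x: "x \<in> radM R M (restr X Z)"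
  then have xZ: "x \<in> Z" by (simp add: radM_eq)
  show "x \<in> radM R M X" unfolding radM_eq
  proof (intro CollectI conjI allI impI)
    show "x \<in> carrier X" using xZ submod_subset[OF Z] by blast
    fix P assume P: "M_prime R M X P"
    show "x \<in> P"
    proof (cases "Z \<subseteq> P")
      case False
      have "M_prime R M (restr X Z) (P \<inter> Z)" by (rule M_prime_restr[OF X P Z False])
      then show ?thesis using x unfolding radM_eq by blast
    qed (use xZ in blast)
  qed
qed

lemma M_prime_preimage:
  fixes X Y :: "('r, 'x) module"
  assumes proj: "proj_sigma TYPE('u) R M" and X: "lmodule R X" "in_sigma TYPE('u) R M X"
    and Y: "lmodule R Y" and \<pi>: "hom_mod R X Y \<pi>" "\<pi> ` carrier X = carrier Y"
    and Q: "M_prime R M Y Q"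
  shows "M_prime R M X {x \<in> carrier X. \<pi> x \<in> Q}" (is "M_prime R M X ?P")
  unfolding M_prime_def
proof (intro conjI allI impI)
  have agX: "abelian_group X" and agY: "abelian_group Y"
    using X(1) Y by (simp_all add: lmodule_abelian_group)
  have Q_sub: "submod R Y Q" "Q \<noteq> carrier Y" using Q by (simp_all add: M_prime_def)
  show "submod R X ?P" by (rule submod_preimage[OF X(1) Y \<pi>(1) Q_sub(1)])
  obtain y where "y \<in> carrier Y" "y \<notin> Q" using Q_sub submod_subset[OF Q_sub(1)] by blast
  then obtain x where "x \<in> carrier X" "\<pi> x \<notin> Q" using \<pi>(2) by (metis imageE)
  then show "?P \<noteq> carrier X" by blast
  fix N Z assume N: "submod R M N" and Z: "submod R X Z"
    and sub: "prod_dot R M N (restr X Z) \<subseteq> ?P"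
  have ZX: "Z \<subseteq> carrier X" using Z by (rule submod_subset)
  have Z': "submod R Y (\<pi> ` Z)" by (rule submod_image[OF agX agY \<pi>(1) Z])
  have "prod_dot R M N (restr Y (\<pi> ` Z)) = \<pi> ` prod_dot R M N (restr X Z)"
    using hom_mod_restr_cod[OF hom_mod_restr_dom[OF \<pi>(1) ZX]]
    by (intro prod_dot_surj_image[OF proj submod_lmodule[OF X(1) Z] in_sigma_submod[OF X Z]
          submod_lmodule[OF Y Z'] _ _ submod_subset[OF N], symmetric]) simp_all
  also have "\<dots> \<subseteq> Q" using sub by (intro image_subsetI) auto
  finally have "prod_dot R M N Y \<subseteq> Q \<or> \<pi> ` Z \<subseteq> Q" by (rule M_primeD[OF Q N Z'])
  then show "prod_dot R M N X \<subseteq> ?P \<or> Z \<subseteq> ?P"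
  proof (elim disjE)
    assume "prod_dot R M N Y \<subseteq> Q"
    then have "prod_dot R M N X \<subseteq> ?P"
      using prod_dot_hom_image[OF \<pi>(1), of M N] prod_dot_subset[of R M N X] by auto
    then show ?thesis ..
  next
    assume "\<pi> ` Z \<subseteq> Q"
    then have "Z \<subseteq> ?P" using ZX by auto
    then show ?thesis ..
  qed
qed

section \<open>Direct summands\<close>

definition direct_compl :: "('r, 'c) ring_scheme \<Rightarrow> ('r, 'x) module \<Rightarrow> 'x set \<Rightarrow> 'x set \<Rightarrow> bool" where
  "direct_compl R X A D \<longleftrightarrow> submod R X A \<and> submod R X D \<and> A \<inter> D \<subseteq> {\<zero>\<^bsub>X\<^esub>} \<and>
     (\<forall>x\<in>carrier X. \<exists>a\<in>A. \<exists>d\<in>D. x = a \<oplus>\<^bsub>X\<^esub> d)"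

definition dproj :: "('r, 'x) module \<Rightarrow> 'x set \<Rightarrow> 'x set \<Rightarrow> 'x \<Rightarrow> 'x" where
  "dproj X A D x = (THE a. a \<in> A \<and> (\<exists>d\<in>D. x = a \<oplus>\<^bsub>X\<^esub> d))"

context
  fixes R :: "('r, 'c) ring_scheme" and X :: "('r, 'x) module" and A D :: "'x set"
  assumes X: "lmodule R X" and AD: "direct_compl R X A D"
begin

interpretation abelian_group X using X by (rule lmodule_abelian_group)

lemma direct_compl_submod: "submod R X A" "submod R X D"
  using AD by (simp_all add: direct_compl_def)

lemma direct_compl_unique:
  assumes "a \<in> A" "a' \<in> A" "d \<in> D" "d' \<in> D" "a \<oplus>\<^bsub>X\<^esub> d = a' \<oplus>\<^bsub>X\<^esub> d'"
  shows "a = a'"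
proof -
  have carrier: "a \<in> carrier X" "a' \<in> carrier X" "d \<in> carrier X" "d' \<in> carrier X"
    using assms(1-4) submod_subset[OF direct_compl_submod(1)] submod_subset[OF direct_compl_submod(2)]
    by auto
  have "a \<oplus>\<^bsub>X\<^esub> \<ominus>\<^bsub>X\<^esub> a' = d' \<oplus>\<^bsub>X\<^esub> \<ominus>\<^bsub>X\<^esub> d"
    using carrier assms(5) by (smt (verit) a_closed a_comm a_inv_closed a_lcomm r_neg1)
  moreover have "a \<oplus>\<^bsub>X\<^esub> \<ominus>\<^bsub>X\<^esub> a' \<in> A" "d' \<oplus>\<^bsub>X\<^esub> \<ominus>\<^bsub>X\<^esub> d \<in> D"
    using assms(1-4) direct_compl_submod by (simp_all add: submod_add submod_a_inv)
  ultimately have "a \<oplus>\<^bsub>X\<^esub> \<ominus>\<^bsub>X\<^esub> a' = \<zero>\<^bsub>X\<^esub>" using AD by (auto simp: direct_compl_def)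
  then show "a = a'" using minus_equality carrier by fastforce
qed

lemma dproj_eq: "\<lbrakk>a \<in> A; d \<in> D\<rbrakk> \<Longrightarrow> dproj X A D (a \<oplus>\<^bsub>X\<^esub> d) = a"
  unfolding dproj_def by (rule the_equality) (auto dest: direct_compl_unique)

lemma dproj_hom: "hom_mod R X (restr X A) (dproj X A D)"
  and dproj_surj: "dproj X A D ` carrier X = A"
proof -
  have A: "A \<subseteq> carrier X" and D: "D \<subseteq> carrier X"
    using direct_compl_submod by (simp_all add: submod_subset)
  have dec: "\<exists>a\<in>A. \<exists>d\<in>D. x = a \<oplus>\<^bsub>X\<^esub> d" if "x \<in> carrier X" for x
    using AD that by (simp add: direct_compl_def)
  show "hom_mod R X (restr X A) (dproj X A D)"
    unfolding hom_mod_def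
  proof (intro conjI ballI)
    show "dproj X A D \<in> carrier X \<rightarrow> carrier (restr X A)" using dec dproj_eq by fastforce
  next
    fix x y assume "x \<in> carrier X" "y \<in> carrier X"
    then obtain a d a' d' where ad: "a \<in> A" "d \<in> D" "x = a \<oplus>\<^bsub>X\<^esub> d"
      and ad': "a' \<in> A" "d' \<in> D" "y = a' \<oplus>\<^bsub>X\<^esub> d'" using dec by meson
    moreover have "a \<in> carrier X" "a' \<in> carrier X" "d \<in> carrier X" "d' \<in> carrier X"
      using ad ad' A D by auto
    ultimately have "x \<oplus>\<^bsub>X\<^esub> y = (a \<oplus>\<^bsub>X\<^esub> a') \<oplus>\<^bsub>X\<^esub> (d \<oplus>\<^bsub>X\<^esub> d')" by (simp add: a_ac)
    then show "dproj X A D (x \<oplus>\<^bsub>X\<^esub> y) = dproj X A D x \<oplus>\<^bsub>restr X A\<^esub> dproj X A D y"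
      using ad ad' direct_compl_submod by (simp add: dproj_eq submod_add)
  next
    fix r x assume r: "r \<in> carrier R" and "x \<in> carrier X"
    then obtain a d where ad: "a \<in> A" "d \<in> D" "x = a \<oplus>\<^bsub>X\<^esub> d" using dec by meson
    then have "smult X r x = smult X r a \<oplus>\<^bsub>X\<^esub> smult X r d"
      using A D r by (simp add: lmodule_smult_add[OF X] subsetD)
    then show "dproj X A D (smult X r x) = smult (restr X A) r (dproj X A D x)"
      using ad r direct_compl_submod by (simp add: dproj_eq submod_smult)
  qed
  have "dproj X A D a = a" if "a \<in> A" for a
    using dproj_eq[OF that submod_zero[OF direct_compl_submod(2)]] that A by auto
  then show "dproj X A D ` carrier X = A" using dec dproj_eq A by force
qed

end

lemma radM_direct_summand:
  fixes X :: "('r, 'x) module"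
  assumes proj: "proj_sigma TYPE('u) R M" and X: "lmodule R X" "in_sigma TYPE('u) R M X"
    and AD: "direct_compl R X A D" and "a \<in> A" "d \<in> D" "a \<oplus>\<^bsub>X\<^esub> d \<in> radM R M X"
  shows "a \<in> radM R M (restr X A)"
  unfolding radM_eq
proof (intro CollectI conjI allI impI)
  show "a \<in> carrier (restr X A)" using \<open>a \<in> A\<close> by simp
  fix Q assume "M_prime R M (restr X A) Q"
  then have "M_prime R M X {x \<in> carrier X. dproj X A D x \<in> Q}"
    using submod_lmodule[OF X(1) direct_compl_submod(1)[OF X(1) AD]] dproj_hom[OF X(1) AD]
      dproj_surj[OF X(1) AD] by (intro M_prime_preimage[OF proj X]) simp_all
  then show "a \<in> Q" using assms(5-7) dproj_eq[OF X(1) AD] by (auto simp: radM_eq)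
qed

lemma (in abelian_group_hom) hom_finsum:
  "s \<in> F \<rightarrow> carrier G \<Longrightarrow> h (finsum G s F) = finsum H (\<lambda>i. h (s i)) F"
proof (induction F rule: infinite_finite_induct)
  case (insert i F)
  then show ?case by (simp add: Pi_def G.finsum_insert H.finsum_insert)
qed simp_all

lemma a_inv_abelian_group_hom:
  assumes "abelian_group X" shows "abelian_group_hom X X (a_inv X)"
proof -
  interpret abelian_group X by fact
  show ?thesis by (rule additive_abelian_group_homI) (simp_all add: assms Pi_def minus_add)
qed

lemma (in abelian_group) finsum_remove:
  assumes "finite F" "l \<in> F" "s \<in> F \<rightarrow> carrier G"
  shows "finsum G s F = s l \<oplus> finsum G s (F - {l})"
proof -
  have "finsum G s (insert l (F - {l})) = s l \<oplus> finsum G s (F - {l})"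
    by (rule finsum_insert) (use assms in auto)
  then show ?thesis using insert_Diff[OF assms(2)] by simp
qed

lemma sum_fam_memI:
  "\<lbrakk>finite F; F \<subseteq> L; \<And>l. l \<in> F \<Longrightarrow> s l \<in> S l\<rbrakk> \<Longrightarrow> finsum X s F \<in> sum_fam X L S"
  unfolding sum_fam_def by blast

lemma sum_fam_subset:
  assumes "abelian_group X" "submod R X P" "\<And>l. l \<in> L \<Longrightarrow> S l \<subseteq> P"
  shows "sum_fam X L S \<subseteq> P"
  using submod_finsum[OF assms(1,2)] assms(3) unfolding sum_fam_def by blast

context
  fixes R :: "('r, 'c) ring_scheme" and X :: "('r, 'x) module" and L :: "'l set"
    and S :: "'l \<Rightarrow> 'x set"
  assumes X: "lmodule R X" and S: "\<And>l. l \<in> L \<Longrightarrow> submod R X (S l)"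
begin

interpretation abelian_group X using X by (rule lmodule_abelian_group)

lemma sum_fam_add:
  assumes "u \<in> sum_fam X L S" "v \<in> sum_fam X L S"
  shows "u \<oplus>\<^bsub>X\<^esub> v \<in> sum_fam X L S"
proof -
  obtain s F t F' where u: "u = finsum X s F" "finite F" "F \<subseteq> L" "\<forall>l\<in>F. s l \<in> S l"
    and v: "v = finsum X t F'" "finite F'" "F' \<subseteq> L" "\<forall>l\<in>F'. t l \<in> S l"
    using assms unfolding sum_fam_def by blast
  define H where "H = F \<union> F'"
  define s' where "s' l = (if l \<in> F then s l else \<zero>\<^bsub>X\<^esub>)" for l
  define t' where "t' l = (if l \<in> F' then t l else \<zero>\<^bsub>X\<^esub>)" for l
  have H: "finite H" "H \<subseteq> L" using u v by (auto simp: H_def)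
  have s'S: "s' l \<in> S l" and t'S: "t' l \<in> S l" if "l \<in> H" for l
    using that H u(4) v(4) submod_zero[OF S] by (auto simp: s'_def t'_def)
  have s't': "s' \<in> H \<rightarrow> carrier X" "t' \<in> H \<rightarrow> carrier X"
    using s'S t'S H(2) submod_subset[OF S] by blast+
  have "u = finsum X s' H" "v = finsum X t' H"
    unfolding u(1) v(1) using H(1) s't'
    by (auto intro!: add.finprod_mono_neutral_cong_left simp: H_def s'_def t'_def)
  then have "u \<oplus>\<^bsub>X\<^esub> v = finsum X (\<lambda>l. s' l \<oplus>\<^bsub>X\<^esub> t' l) H"
    using s't' by simp
  also have "\<dots> \<in> sum_fam X L S"
    using H s'S t'S submod_add[OF S] by (intro sum_fam_memI) blast+
  finally show ?thesis .
qed

lemma sum_fam_hom_image: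
  assumes h: "abelian_group_hom X X h" and hS: "\<And>l. l \<in> L \<Longrightarrow> h ` S l \<subseteq> S l"
    and u: "u \<in> sum_fam X L S"
  shows "h u \<in> sum_fam X L S"
proof -
  obtain s F where s: "u = finsum X s F" "finite F" "F \<subseteq> L" "\<forall>l\<in>F. s l \<in> S l"
    using u unfolding sum_fam_def by blast
  have "s \<in> F \<rightarrow> carrier X" using s(3,4) submod_subset[OF S] by blast
  then have "h u = finsum X (\<lambda>l. h (s l)) F" unfolding s(1) by (rule abelian_group_hom.hom_finsum[OF h])
  also have "\<dots> \<in> sum_fam X L S" using s hS by (intro sum_fam_memI) blast+
  finally show ?thesis .
qed

lemma sum_fam_submod: "submod R X (sum_fam X L S)"
  unfolding submod_def
proof (intro conjI ballI)
  show "sum_fam X L S \<subseteq> carrier X"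
    using sum_fam_subset[OF abelian_group_axioms submod_carrier[OF X]] submod_subset[OF S] by blast
  show "\<zero>\<^bsub>X\<^esub> \<in> sum_fam X L S" using sum_fam_memI[where F = "{}" and X = X and L = L and S = S] by simp
  show "\<And>u v. \<lbrakk>u \<in> sum_fam X L S; v \<in> sum_fam X L S\<rbrakk> \<Longrightarrow> u \<oplus>\<^bsub>X\<^esub> v \<in> sum_fam X L S"
    by (rule sum_fam_add)
  show "\<ominus>\<^bsub>X\<^esub> u \<in> sum_fam X L S" if "u \<in> sum_fam X L S" for u
    using a_inv_abelian_group_hom[OF abelian_group_axioms] _ that
    by (rule sum_fam_hom_image) (auto intro: submod_a_inv[OF S])
  show "smult X a u \<in> sum_fam X L S" if "a \<in> carrier R" "u \<in> sum_fam X L S" for a u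
    using smult_abelian_group_hom[OF X that(1)] _ that(2)
    by (rule sum_fam_hom_image) (use submod_smult[OF S] that(1) in blast)
qed

end

lemma finsum_split_sum_fam:
  assumes "abelian_group X" "finite F" "F \<subseteq> L" "\<forall>k\<in>F. s k \<in> S k"
    and "s \<in> F \<rightarrow> carrier X" "l \<in> F"
  shows "finsum X s F = s l \<oplus>\<^bsub>X\<^esub> finsum X s (F - {l})"
    and "finsum X s (F - {l}) \<in> sum_fam X (L - {l}) S"
proof -
  show "finsum X s F = s l \<oplus>\<^bsub>X\<^esub> finsum X s (F - {l})"
    by (rule abelian_group.finsum_remove[OF assms(1,2,6,5)])
  show "finsum X s (F - {l}) \<in> sum_fam X (L - {l}) S"
    using assms(2-4) by (intro sum_fam_memI) auto
qed

lemma internal_dsum_direct_compl: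
  assumes X: "lmodule R X" and dsum: "internal_dsum R X L Xs" and l: "l \<in> L"
  shows "direct_compl R X (Xs l) (sum_fam X (L - {l}) Xs)"
  unfolding direct_compl_def
proof (intro conjI ballI)
  have Xs: "\<And>k. k \<in> L \<Longrightarrow> submod R X (Xs k)" using dsum by (simp add: internal_dsum_def)
  have XsX: "\<And>k. k \<in> L \<Longrightarrow> Xs k \<subseteq> carrier X" using Xs by (rule submod_subset)
  interpret abelian_group X using X by (rule lmodule_abelian_group)
  show "submod R X (Xs l)" using Xs l .
  show "submod R X (sum_fam X (L - {l}) Xs)" using X Xs by (intro sum_fam_submod) auto
  show "Xs l \<inter> sum_fam X (L - {l}) Xs \<subseteq> {\<zero>\<^bsub>X\<^esub>}" using dsum l by (simp add: internal_dsum_def)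
  fix x assume "x \<in> carrier X"
  then have "x = \<zero>\<^bsub>X\<^esub> \<oplus>\<^bsub>X\<^esub> x" by simp
  from \<open>x \<in> carrier X\<close> obtain s F where x: "x = finsum X s F" "finite F" "F \<subseteq> L" "\<forall>k\<in>F. s k \<in> Xs k"
    using dsum unfolding internal_dsum_def sum_fam_def by blast
  show "\<exists>a\<in>Xs l. \<exists>d\<in>sum_fam X (L - {l}) Xs. x = a \<oplus>\<^bsub>X\<^esub> d"
  proof (cases "l \<in> F")
    case True
    have "s \<in> F \<rightarrow> carrier X" using x(3,4) XsX by blast
    then show ?thesis using finsum_split_sum_fam[OF abelian_group_axioms x(2-4) _ True] x(1,4) True by blast
  next
    case False
    then have "x \<in> sum_fam X (L - {l}) Xs" unfolding x(1) using x(2-4) by (intro sum_fam_memI) auto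
    then show ?thesis using submod_zero[OF Xs[OF l]] \<open>x = \<zero>\<^bsub>X\<^esub> \<oplus>\<^bsub>X\<^esub> x\<close> by blast
  qed
qed

theorem proposition2p30:
  fixes R :: "('r, 'c) ring_scheme" and M :: "('r, 'm) module"
    and X :: "('r, 'x) module" and L :: "'l set" and Xs :: "'l \<Rightarrow> 'x set"
  assumes "ring R" and "lmodule R M"
    and "proj_sigma TYPE('u) R M"
    and "lmodule R X" and "in_sigma TYPE('u) R M X"
    and "internal_dsum R X L Xs"
  shows "radM R M X = sum_fam X L (\<lambda>l. radM R M (restr X (Xs l)))"
proof
  note proj = assms(3) and X = assms(4,5) and dsum = assms(6)
  have agX: "abelian_group X" using X(1) by (rule lmodule_abelian_group)
  have Xs: "\<And>l. l \<in> L \<Longrightarrow> submod R X (Xs l)" using dsum by (simp add: internal_dsum_def)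
  have XsX: "\<And>l. l \<in> L \<Longrightarrow> Xs l \<subseteq> carrier X" using Xs by (rule submod_subset)
  show "radM R M X \<subseteq> sum_fam X L (\<lambda>l. radM R M (restr X (Xs l)))"
  proof
    fix x assume x: "x \<in> radM R M X"
    then obtain s F where s: "x = finsum X s F" "finite F" "F \<subseteq> L" "\<forall>k\<in>F. s k \<in> Xs k"
      using dsum unfolding radM_eq internal_dsum_def sum_fam_def by blast
    have "s \<in> F \<rightarrow> carrier X" using s(3,4) XsX by blast
    note split = finsum_split_sum_fam[OF agX s(2-4) this]
    have "s l \<in> radM R M (restr X (Xs l))" if l: "l \<in> F" for l
    proof -
      have "l \<in> L" using l s(3) by blast
      moreover have "s l \<oplus>\<^bsub>X\<^esub> finsum X s (F - {l}) \<in> radM R M X" using x split(1)[OF l] s(1) by simp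
      ultimately show ?thesis
        using radM_direct_summand[OF proj X internal_dsum_direct_compl[OF X(1) dsum]] split(2)[OF l]
          s(4) l by blast
    qed
    then show "x \<in> sum_fam X L (\<lambda>l. radM R M (restr X (Xs l)))"
      unfolding s(1) by (rule sum_fam_memI[OF s(2,3)])
  qed
  show "sum_fam X L (\<lambda>l. radM R M (restr X (Xs l))) \<subseteq> radM R M X"
    using agX submod_radM[OF X(1)] radM_restr_subset[OF X(1) Xs] by (rule sum_fam_subset)
qed

end
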